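(* Let $\gamma\in\mathbb{R}\setminus\{0,1,2,-2\}$ and $\epsilon\in\mathbb{R}$. Let $\mathcal A$ be an associative algebra over $\mathbb{C}$ containing elements $a_j,a_j^{+}$ ($j=1,2,3$) satisfying the boson commutation relations \[ [a_j,a_k^{+}]=\delta_{jk},\qquad [a_j,a_k]=0,\qquad [a_j^{+},a_k^{+}]=0\qquad (j,k=1,2,3), \] where $[A,B]=AB-BA$. Define \[ Y=\frac{\gamma-2}{2(\gamma+2)}(a_1^{+})^2a_1-\frac{2\gamma\,a_1^{+}}{\gamma+2}\Big(1+\frac1\gamma a_2^{+}\Big)a_2,\qquad Z=\frac{\gamma-2}{\gamma+2}a_1^{+}a_1-\frac{2\gamma}{\gamma+2}\Big(1+\frac1\gamma a_2^{+}\Big)a_2, \] \[ X_1=a_1^{+}a_1+a_3^{+}a_3+\epsilon Y,\quad X_2=a_1,\quad X_3=a_3,\quad X_4=a_3^{+}a_3+\frac{2\gamma}{\gamma-2}\Big(1+\frac1\gamma a_2^{+}\Big)a_2 . \] Then these elements satisfy the commutation relations \[ [X_2,X_1]=X_2+\epsilon Z,\quad [X_2,X_4]=[X_2,X_3]=[X_1,X_4]=0,\quad [X_1,X_3]=-X_3,\quad [X_3,X_4]=X_3, \] \[ [X_1,Z]=-\epsilon\,\tfrac{\gamma-2}{\gamma+2}\,Y,\quad [X_1,Y]=Y,\quad [X_2,Y]=Z,\quad [X_2,Z]=\tfrac{\gamma-2}{\gamma+2}X_2,\quad [Z,Y]=\tfrac{\gamma-2}{\gamma+2}Y, \] \[ [X_3,Y]=[X_3,Z]=[X_4,Y]=[X_4,Z]=0,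 \] i.e. they give a realization of this Lie algebra in terms of boson annihilation and creation operators.
   Context: The intended model is $a_1^{+}=t$, $a_2^{+}=u$, $a_3^{+}=x$ (multiplication operators) and $a_1=\partial_t$, $a_2=\partial_u$, $a_3=\partial_x$, under which the listed elements become the approximate symmetry generators of $u_{tt}+\epsilon u_t=[(1+u/\gamma)^{\gamma-1}]_{xx}$ together with two auxiliary operators $Y,Z$. *)

theory Defs
  imports Complex_Main
begin

definition comm :: "'a::ring \<Rightarrow> 'a \<Rightarrow> 'a" where
  "comm A B = A * B - B * A"

text \<open>An associative unital algebra over the complex numbers is a ring with unit
  together with a unital ring homomorphism from the complex numbers into its centre
  (the structure map, giving scalar multiplication  c . A = emb c * A).\<close>
definition complex_algebra_emb :: "(complex \<Rightarrow> 'a::ring_1) \<Rightarrow> bool" where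
  "complex_algebra_emb emb \<longleftrightarrow>
     emb 1 = 1 \<and>
     (\<forall>x y. emb (x + y) = emb x + emb y) \<and>
     (\<forall>x y. emb (x * y) = emb x * emb y) \<and>
     (\<forall>x A. emb x * A = A * emb x)"

end

theory Submission
  imports Defs
begin

(* With b = a_1, c = a_3 and w = (1 + a_2^+/gamma) a_2, which commutes with modes 1 and 3,
  all operators involved are real combinations of b, b^+ b, (b^+)^2 b, b^+ w, w, c^+ c and c.
  The Leibniz rule for commutators gives the brackets of these seven elements; they close
  except for [(b^+)^2 b, b^+ w] = (b^+)^2 w, whose coefficient happens to vanish in every
  relation of the theorem.  Each relation thereby becomes an identity between coordinates,
  i.e. between rational functions of gamma and epsilon; only gamma <> 2 and gamma <> -2 are
  needed, since w enters solely through its commutation with modes 1 and 3. *)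

lemma comm_add_left: "comm (A + B) C = comm A C + comm B (C::'a::ring)"
  by (simp add: comm_def algebra_simps)

lemma comm_add_right: "comm A (B + C) = comm A B + comm A (C::'a::ring)"
  by (simp add: comm_def algebra_simps)

lemma comm_mult_left: "comm (A * B) C = A * comm B C + comm A C * (B::'a::ring)"
  by (simp add: comm_def algebra_simps)

lemma comm_mult_right: "comm A (B * C) = comm A B * C + B * comm A (C::'a::ring)"
  by (simp add: comm_def algebra_simps)

lemma comm_self [simp]: "comm A (A::'a::ring) = 0"
  by (simp add: comm_def)

lemma comm_one_right [simp]: "comm A (1::'a::ring_1) = 0"
  by (simp add: comm_def)

lemma comm_swap: "comm A B = C \<Longrightarrow> comm B A = - (C::'a::ring)"
  by (auto simp: comm_def)

lemmas comm_expand = comm_add_left comm_add_right comm_mult_left comm_mult_right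

locale complex_algebra =
  fixes emb :: "complex \<Rightarrow> 'a::ring_1"
  assumes emb: "complex_algebra_emb emb"
begin

definition scal :: "real \<Rightarrow> 'a" where
  "scal r = emb (of_real r)"

lemma scal_add: "scal (x + y) = scal x + scal y"
  using emb unfolding complex_algebra_emb_def scal_def by (metis of_real_add)

lemma scal_mult: "scal (x * y) = scal x * scal y"
  using emb unfolding complex_algebra_emb_def scal_def by (metis of_real_mult)

lemma scal_1: "scal 1 = 1"
  using emb unfolding complex_algebra_emb_def scal_def by simp

lemma scal_0: "scal 0 = 0"
  using scal_add[of 0 0] by simp

lemma scal_minus: "scal (- x) = - scal x"
  using scal_add[of x "- x"] by (simp add: scal_0 eq_neg_iff_add_eq_0 add.commute)

lemma scal_diff: "scal (x - y) = scal x - scal y"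
  using scal_add[of x "- y"] by (simp add: scal_minus)

lemma scal_2: "scal 2 = 2"
  using scal_add[of 1 1] by (simp add: scal_1)

lemma scal_commute: "scal r * A = A * scal r"
  using emb unfolding complex_algebra_emb_def scal_def by blast

lemma scal_left_commute: "scal x * (scal y * A) = scal y * (scal x * A)"
  by (metis mult.assoc scal_commute)

lemma comm_scal_left: "comm (scal r * A) B = scal r * comm A B"
  by (simp add: comm_def algebra_simps scal_commute)

lemma comm_scal_right: "comm A (scal r * B) = scal r * comm A B"
  by (simp add: comm_def algebra_simps scal_commute)

lemma comm_scal_right_0 [simp]: "comm A (scal r) = 0"
  by (simp add: comm_def scal_commute)

end

locale two_modes_with_central = complex_algebra emb for emb :: "complex \<Rightarrow> 'a::ring_1" +
  fixes b b' c c' w :: 'a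
  assumes comm_b_b': "comm b b' = 1"
    and comm_c_c': "comm c c' = 1"
    and modes_commute: "comm b c = 0" "comm b c' = 0" "comm b' c = 0" "comm b' c' = 0"
    and w_central: "comm b w = 0" "comm b' w = 0" "comm c w = 0" "comm c' w = 0"
begin

definition "b'b = b' * b"
definition "b'2b = b'\<^sup>2 * b"
definition "b'w = b' * w"
definition "b'2w = b'\<^sup>2 * w"
definition "c'c = c' * c"

lemmas generator_comms = comm_b_b' comm_c_c' modes_commute w_central

lemma comm_basis:
  "comm b b'b = b" "comm b b'2b = 2 * b'b" "comm b b'w = w" "comm b w = 0" "comm b c'c = 0"
  "comm b c = 0"
  "comm b'b b'2b = b'2b" "comm b'b b'w = b'w" "comm b'b w = 0" "comm b'b c'c = 0" "comm b'b c = 0"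
  "comm b'2b b'w = b'2w" "comm b'2b w = 0" "comm b'2b c'c = 0" "comm b'2b c = 0"
  "comm b'w w = 0" "comm b'w c'c = 0" "comm b'w c = 0"
  "comm w c'c = 0" "comm w c = 0"
  "comm c'c c = - c"
  unfolding b'b_def b'2b_def b'w_def b'2w_def c'c_def power2_eq_square
  by (simp_all add: comm_expand generator_comms generator_comms[THEN comm_swap]
      algebra_simps mult_2)

definition lincomb :: "real \<Rightarrow> real \<Rightarrow> real \<Rightarrow> real \<Rightarrow> real \<Rightarrow> real \<Rightarrow> real \<Rightarrow> 'a" where
  "lincomb x1 x2 x3 x4 x5 x6 x7 =
     scal x1 * b + scal x2 * b'b + scal x3 * b'2b + scal x4 * b'w + scal x5 * w
       + scal x6 * c'c + scal x7 * c"

lemma comm_lincomb: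
  "comm (lincomb x1 x2 x3 x4 x5 x6 x7) (lincomb y1 y2 y3 y4 y5 y6 y7) =
     lincomb (x1 * y2 - x2 * y1) (2 * (x1 * y3 - x3 * y1)) (x2 * y3 - x3 * y2)
       (x2 * y4 - x4 * y2) (x1 * y4 - x4 * y1) 0 (x7 * y6 - x6 * y7)
     + scal (x3 * y4 - x4 * y3) * b'2w"
  unfolding lincomb_def
  by (simp add: comm_add_left comm_add_right comm_scal_left comm_scal_right
      comm_basis comm_basis[THEN comm_swap]
      scal_add scal_diff scal_mult scal_0 scal_2 scal_left_commute algebra_simps)

lemma lincomb_add:
  "lincomb x1 x2 x3 x4 x5 x6 x7 + lincomb y1 y2 y3 y4 y5 y6 y7 =
     lincomb (x1 + y1) (x2 + y2) (x3 + y3) (x4 + y4) (x5 + y5) (x6 + y6) (x7 + y7)"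
  unfolding lincomb_def by (simp add: scal_add algebra_simps)

lemma lincomb_scal:
  "scal k * lincomb x1 x2 x3 x4 x5 x6 x7 =
     lincomb (k * x1) (k * x2) (k * x3) (k * x4) (k * x5) (k * x6) (k * x7)"
  unfolding lincomb_def by (simp add: scal_mult scal_left_commute algebra_simps)

lemma lincomb_minus:
  "- lincomb x1 x2 x3 x4 x5 x6 x7 = lincomb (- x1) (- x2) (- x3) (- x4) (- x5) (- x6) (- x7)"
  unfolding lincomb_def by (simp add: scal_minus algebra_simps)

lemma lincomb_plus_b'2w_eqI:
  assumes "x1 = y1" "x2 = y2" "x3 = y3" "x4 = y4" "x5 = y5" "x6 = y6" "x7 = y7" "p = 0"
  shows "lincomb x1 x2 x3 x4 x5 x6 x7 + scal p * b'2w = lincomb y1 y2 y3 y4 y5 y6 y7"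
  using assms by (simp add: scal_0)

lemma lincomb_plus_b'2w_eq_0I:
  assumes "x1 = 0" "x2 = 0" "x3 = 0" "x4 = 0" "x5 = 0" "x6 = 0" "x7 = 0" "p = 0"
  shows "lincomb x1 x2 x3 x4 x5 x6 x7 + scal p * b'2w = 0"
  using assms by (simp add: lincomb_def scal_0)

end

theorem proposition2:
  fixes emb :: "complex \<Rightarrow> 'a::ring_1"
    and a ap :: "nat \<Rightarrow> 'a"
    and \<gamma> \<epsilon> :: real
    and Y Z X1 X2 X3 X4 :: 'a
  assumes alg: "complex_algebra_emb emb"
    and gamma: "\<gamma> \<noteq> 0" "\<gamma> \<noteq> 1" "\<gamma> \<noteq> 2" "\<gamma> \<noteq> -2"
    and ccr1: "\<And>j k. j \<in> {1,2,3} \<Longrightarrow> k \<in> {1,2,3} \<Longrightarrow>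
                 comm (a j) (ap k) = (if j = k then 1 else 0)"
    and ccr2: "\<And>j k. j \<in> {1,2,3} \<Longrightarrow> k \<in> {1,2,3} \<Longrightarrow> comm (a j) (a k) = 0"
    and ccr3: "\<And>j k. j \<in> {1,2,3} \<Longrightarrow> k \<in> {1,2,3} \<Longrightarrow> comm (ap j) (ap k) = 0"
    and Y_def: "Y = emb (of_real ((\<gamma> - 2) / (2 * (\<gamma> + 2)))) * (ap 1)\<^sup>2 * a 1
                   - emb (of_real (2 * \<gamma> / (\<gamma> + 2))) * ap 1
                     * (1 + emb (of_real (1 / \<gamma>)) * ap 2) * a 2"
    and Z_def: "Z = emb (of_real ((\<gamma> - 2) / (\<gamma> + 2))) * ap 1 * a 1
                   - emb (of_real (2 * \<gamma> / (\<gamma> + 2)))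
                     * (1 + emb (of_real (1 / \<gamma>)) * ap 2) * a 2"
    and X1_def: "X1 = ap 1 * a 1 + ap 3 * a 3 + emb (of_real \<epsilon>) * Y"
    and X2_def: "X2 = a 1"
    and X3_def: "X3 = a 3"
    and X4_def: "X4 = ap 3 * a 3 + emb (of_real (2 * \<gamma> / (\<gamma> - 2)))
                     * (1 + emb (of_real (1 / \<gamma>)) * ap 2) * a 2"
  shows "comm X2 X1 = X2 + emb (of_real \<epsilon>) * Z
       \<and> comm X2 X4 = 0 \<and> comm X2 X3 = 0 \<and> comm X1 X4 = 0
       \<and> comm X1 X3 = - X3 \<and> comm X3 X4 = X3
       \<and> comm X1 Z = - (emb (of_real (\<epsilon> * (\<gamma> - 2) / (\<gamma> + 2))) * Y)
       \<and> comm X1 Y = Y \<and> comm X2 Y = Z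
       \<and> comm X2 Z = emb (of_real ((\<gamma> - 2) / (\<gamma> + 2))) * X2
       \<and> comm Z Y = emb (of_real ((\<gamma> - 2) / (\<gamma> + 2))) * Y
       \<and> comm X3 Y = 0 \<and> comm X3 Z = 0 \<and> comm X4 Y = 0 \<and> comm X4 Z = 0"
proof -
  interpret complex_algebra emb
    using alg by unfold_locales
  have scal: "emb (of_real r) = scal r" for r
    by (simp add: scal_def)
  define w where "w = (1 + scal (1 / \<gamma>) * ap 2) * a 2"
  have ccr1_swapped: "comm (ap k) (a j) = (if j = k then -1 else 0)"
    if "j \<in> {1,2,3}" "k \<in> {1,2,3}" for j k
    using comm_swap[OF ccr1[OF that]] by simp
  interpret two_modes_with_central emb "a 1" "ap 1" "a 3" "ap 3" w
    using ccr1 ccr1_swapped ccr2 ccr3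
    by unfold_locales (auto simp: w_def comm_expand comm_scal_right)
  have Y: "Y = lincomb 0 0 ((\<gamma> - 2) / (2 * (\<gamma> + 2))) (- (2 * \<gamma> / (\<gamma> + 2))) 0 0 0"
    unfolding Y_def scal lincomb_def b'2b_def b'w_def
    by (simp add: scal_0 scal_minus mult.assoc flip: w_def)
  have Z: "Z = lincomb 0 ((\<gamma> - 2) / (\<gamma> + 2)) 0 0 (- (2 * \<gamma> / (\<gamma> + 2))) 0 0"
    unfolding Z_def scal lincomb_def b'b_def
    by (simp add: scal_0 scal_minus mult.assoc flip: w_def)
  have X1: "X1 = lincomb 0 1 0 0 0 1 0 + scal \<epsilon> * Y"
    unfolding X1_def scal lincomb_def b'b_def c'c_def by (simp add: scal_0 scal_1)
  have X2: "X2 = lincomb 1 0 0 0 0 0 0"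
    unfolding X2_def lincomb_def by (simp add: scal_0 scal_1)
  have X3: "X3 = lincomb 0 0 0 0 0 0 1"
    unfolding X3_def lincomb_def by (simp add: scal_0 scal_1)
  have X4: "X4 = lincomb 0 0 0 0 (2 * \<gamma> / (\<gamma> - 2)) 1 0"
    unfolding X4_def scal lincomb_def c'c_def
    by (simp add: scal_0 scal_1 mult.assoc flip: w_def)
  have "\<gamma> + 2 \<noteq> 0" "\<gamma> - 2 \<noteq> 0"
    using gamma by auto
  then show ?thesis
    unfolding X1 X2 X3 X4 Y Z scal
    by (simp only: lincomb_add lincomb_scal lincomb_minus comm_lincomb)
      (intro conjI lincomb_plus_b'2w_eqI lincomb_plus_b'2w_eq_0I; simp add: field_simps)
qed

end
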